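(* Let $d\ge1$ and let $P$ be a permutation array of rank $2$ and dimension $d$. Let $\Gamma$ be the star metric graph with central vertex $v$ and edges $e_1,\dots,e_d$ of common length $\ell>0$. For $\mathbf x\in[2]^d$, let $f_{\mathbf x}$ be the function on $\Gamma$ with $f_{\mathbf x}(v)=0$ and constant slope $x_i$ along $e_i$ directed away from $v$. Let $s$ be an integer with $s\ge\sum_ix_i$ for all $\mathbf x\in P$, and let $\Sigma=\langle f_{\mathbf x}:\mathbf x\in P\rangle\subseteq R(s\cdot v)$. Then for every effective divisor $E=v_1+v_2$ of degree $2$ on $\Gamma$ there exists $f\in\Sigma$ with $\mathrm{div}(f)+s\cdot v\ge E$.
   Context: $\mathrm{sl}_\eta(f)$ denotes the outgoing slope. We set $\mathrm{div}(f)=\sum_p(-\sum_{\eta\in T_p}\mathrm{sl}_\eta(f))p$ and $R(D)=\{f:D+\mathrm{div}(f)\ge0\}$. $\langle f_1,\dots,f_n\rangle$ denotes the set of all $\min\{f_1+a_1,\dots,f_n+a_n\}$ with $a_i\in\mathbb R$. $[2]=\{0,1,2\}$, and $[2]^d$ is ordered coordinatewise with meet the coordinatewise minimum. $P\subseteq[r]^d$ is rankable of rank $t$ if each coordinate takes exactly $t+1$ distinct values on $P$. It is totally rankable if each principal subarray $\{\mathbf y\in P:\mathbf y\succeq\mathbf x\}$ is rankable. A redundant point is the coordinatewise minimum of $\ge2$ elements of $P$, each sharing a coordinate with it. A permutation array of rank $r$ and dimension $d$ is a totally rankable $P\subseteq[r]^d$ of rank $r$ with no redundant points. *)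

theory Defs
  imports Complex_Main
begin

text \<open>Points of [r]^d are functions nat => nat, with coordinates indexed by 0..d-1,
  each coordinate in {0..r}, and value 0 outside the index range (extensional).\<close>

definition grid :: "nat \<Rightarrow> nat \<Rightarrow> (nat \<Rightarrow> nat) set" where
  "grid r d = {x. (\<forall>i<d. x i \<le> r) \<and> (\<forall>i\<ge>d. x i = 0)}"

definition dominates :: "nat \<Rightarrow> (nat \<Rightarrow> nat) \<Rightarrow> (nat \<Rightarrow> nat) \<Rightarrow> bool" where
  "dominates d y x \<longleftrightarrow> (\<forall>i<d. x i \<le> y i)"

definition rankable_of_rank :: "nat \<Rightarrow> (nat \<Rightarrow> nat) set \<Rightarrow> int \<Rightarrow> bool" where
  "rankable_of_rank d P t \<longleftrightarrow> (\<forall>i<d. int (card ((\<lambda>y. y i) ` P)) = t + 1)"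

definition rankable :: "nat \<Rightarrow> (nat \<Rightarrow> nat) set \<Rightarrow> bool" where
  "rankable d P \<longleftrightarrow> (\<exists>t. rankable_of_rank d P t)"

definition principal_subarray :: "nat \<Rightarrow> (nat \<Rightarrow> nat) set \<Rightarrow> (nat \<Rightarrow> nat) \<Rightarrow> (nat \<Rightarrow> nat) set" where
  "principal_subarray d P x = {y\<in>P. dominates d y x}"

definition totally_rankable :: "nat \<Rightarrow> nat \<Rightarrow> (nat \<Rightarrow> nat) set \<Rightarrow> bool" where
  "totally_rankable r d P \<longleftrightarrow> (\<forall>x\<in>grid r d. rankable d (principal_subarray d P x))"

definition meet :: "(nat \<Rightarrow> nat) set \<Rightarrow> (nat \<Rightarrow> nat)" where
  "meet S = (\<lambda>i. Min ((\<lambda>y. y i) ` S))"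

definition redundant :: "nat \<Rightarrow> (nat \<Rightarrow> nat) set \<Rightarrow> (nat \<Rightarrow> nat) \<Rightarrow> bool" where
  "redundant d P z \<longleftrightarrow> z \<in> P \<and> (\<exists>S. S \<subseteq> P \<and> z \<notin> S \<and> finite S \<and> card S \<ge> 2 \<and>
       z = meet S \<and> (\<forall>y\<in>S. \<exists>i<d. y i = z i))"

definition permutation_array :: "nat \<Rightarrow> nat \<Rightarrow> (nat \<Rightarrow> nat) set \<Rightarrow> bool" where
  "permutation_array r d P \<longleftrightarrow> P \<subseteq> grid r d \<and> totally_rankable r d P \<and>
     rankable_of_rank d P (int r) \<and> (\<nexists>z. redundant d P z)"

text \<open>A point of the star graph with d edges of length l is encoded as (i,t):
  the point at distance t from the centre along edge e_i (i<d, 0<t<=l);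
  the centre v is encoded as (0,0).\<close>

definition star_center :: "nat \<times> real" where
  "star_center = (0, 0)"

definition star_graph :: "nat \<Rightarrow> real \<Rightarrow> (nat \<times> real) set" where
  "star_graph d l = {star_center} \<union> {(i, t). i < d \<and> 0 < t \<and> t \<le> l}"

definition star_pt :: "nat \<Rightarrow> real \<Rightarrow> nat \<times> real" where
  "star_pt i t = (if t = 0 then star_center else (i, t))"

text \<open>Tangent directions at a point: (i, 1) = along e_i away from v,
  (i, -1) = along e_i towards v.\<close>
definition tangents :: "nat \<Rightarrow> real \<Rightarrow> nat \<times> real \<Rightarrow> (nat \<times> real) set" where
  "tangents d l p =
     (if p = star_center then {(i, 1) | i. i < d}
      else if snd p < l then {(fst p, 1), (fst p, -1)}
      else {(fst p, -1)})"

definition out_slope :: "((nat \<times> real) \<Rightarrow> real) \<Rightarrow> nat \<times> real \<Rightarrow> nat \<times> real \<Rightarrow> real" where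
  "out_slope g p eta =
     Lim (at_right 0) (\<lambda>h. (g (star_pt (fst eta) (snd p + snd eta * h)) - g p) / h)"

definition star_div :: "nat \<Rightarrow> real \<Rightarrow> ((nat \<times> real) \<Rightarrow> real) \<Rightarrow> nat \<times> real \<Rightarrow> real" where
  "star_div d l g p = - (\<Sum>eta\<in>tangents d l p. out_slope g p eta)"

definition fx :: "(nat \<Rightarrow> nat) \<Rightarrow> (nat \<times> real) \<Rightarrow> real" where
  "fx x p = real (x (fst p)) * snd p"

definition trop_span :: "(nat \<Rightarrow> nat) set \<Rightarrow> ((nat \<times> real) \<Rightarrow> real) set" where
  "trop_span P = {(\<lambda>p. Min ((\<lambda>x. fx x p + a x) ` P)) | a. True}"

end

theory Submission
  imports Defs
begin

text \<open>
  A member of the span is F = min_x (f_x + a_x). Along each edge F is a minimum of finitely many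
  affine functions, so its outgoing slopes are extreme slopes among the pieces active at the point:
  at a point of edge e_i, div F is at least u_i - u'_i for any two active pieces u, u', and at v,
  div F + s \<ge> y_i - y'_i for any two pieces y, y' minimising a, because s bounds the coordinate
  sums. Hence div F + s v \<ge> 0 everywhere, and it suffices to choose weights a for which pieces
  with different i-th coordinates are active at each point v1, v2 on edge e_i (with two different
  differences if v1 = v2). On a single edge weights depending only on x_i do this. For points on
  different edges i \<noteq> j one needs a level D such that the pieces with w x \<le> D take two values
  of x_i and those with w x \<ge> D take two values of x_j, where w x = (2 - x_j) t2 - (2 - x_i) t1.
  Such a level exists because the rank conditions on the principal subarrays prevent a
  permutation array of rank 2 from lying in a union of two hyperplanes x_i = e and x_j = c.
\<close>

section \<open>Minima of affine functions\<close>

definition minimizers :: "('k \<Rightarrow> real) \<Rightarrow> 'k set \<Rightarrow> 'k set" where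
  "minimizers c K = {k \<in> K. \<forall>k'\<in>K. c k \<le> c k'}"

lemma minimizers_subset: "minimizers c K \<subseteq> K"
  by (auto simp: minimizers_def)

lemma minimizers_nonempty:
  assumes "finite K" "K \<noteq> {}"
  shows "minimizers c K \<noteq> {}"
  using ex_is_arg_min_if_finite[OF assms, of c]
  by (auto simp: minimizers_def is_arg_min_linorder)

lemma minimizers_Min:
  assumes "finite K" "k \<in> minimizers c K"
  shows "c k = Min (c ` K)"
  using assms by (intro Min_eqI[symmetric]) (auto simp: minimizers_def)

lemma tendsto_Min_affine_slope:
  fixes c m :: "'k \<Rightarrow> real"
  assumes fin: "finite K" and ne: "K \<noteq> {}"
  shows "((\<lambda>h. (Min ((\<lambda>k. c k + m k * h) ` K) - Min (c ` K)) / h)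
           \<longlongrightarrow> Min (m ` minimizers c K)) (at_right 0)"
proof -
  let ?M = "minimizers c K"
  have fin_M: "finite ?M"
    using finite_subset[OF minimizers_subset fin] .
  obtain k0 where k0: "k0 \<in> minimizers m ?M"
    using minimizers_nonempty[OF fin_M minimizers_nonempty[OF fin ne]] by blast
  have k0_M: "k0 \<in> ?M"
    using subsetD[OF minimizers_subset k0] .
  have slope: "m k0 = Min (m ` ?M)"
    using minimizers_Min[OF fin_M k0] .
  have "\<forall>\<^sub>F h in at_right 0. c k0 + m k0 * h \<le> c k + m k * h" if k: "k \<in> K" for k
  proof (cases "k \<in> ?M")
    case True
    then have "m k0 \<le> m k" "c k0 = c k"
      using k k0 k0_M by (auto simp: minimizers_def intro: order.antisym)
    then have "c k0 + m k0 * h \<le> c k + m k * h" if "0 < h" for h :: real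
      using that by (simp add: mult_right_mono)
    then show ?thesis
      using eventually_at_right_less[of 0] by (auto elim: eventually_mono)
  next
    case False
    then have gap: "0 < c k - c k0"
      using k k0_M by (force simp: minimizers_def)
    have "((\<lambda>h. (m k0 - m k) * h) \<longlongrightarrow> (m k0 - m k) * 0) (at_right 0)"
      by (intro tendsto_intros)
    then have "\<forall>\<^sub>F h in at_right 0. (m k0 - m k) * h < c k - c k0"
      using gap by (intro order_tendstoD(2)) auto
    then show ?thesis
      by (rule eventually_mono) (simp add: algebra_simps)
  qed
  then have "\<forall>\<^sub>F h in at_right 0. \<forall>k\<in>K. c k0 + m k0 * h \<le> c k + m k * h"
    using fin by (intro eventually_ball_finite) auto
  then have "\<forall>\<^sub>F h in at_right 0. 0 < h \<and> (\<forall>k\<in>K. c k0 + m k0 * h \<le> c k + m k * h)"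
    using eventually_at_right_less[of 0] by (intro eventually_conj)
  then have "\<forall>\<^sub>F h in at_right 0. m k0 = (Min ((\<lambda>k. c k + m k * h) ` K) - Min (c ` K)) / h"
  proof (rule eventually_mono)
    fix h :: real
    assume h: "0 < h \<and> (\<forall>k\<in>K. c k0 + m k0 * h \<le> c k + m k * h)"
    have "Min ((\<lambda>k. c k + m k * h) ` K) = c k0 + m k0 * h"
      using h fin k0_M by (intro Min_eqI) (auto simp: minimizers_def)
    moreover have "Min (c ` K) = c k0"
      using minimizers_Min[OF fin k0_M] ..
    ultimately show "m k0 = (Min ((\<lambda>k. c k + m k * h) ` K) - Min (c ` K)) / h"
      using h by simp
  qed
  then show ?thesis
    unfolding slope by (rule Lim_transform_eventually[OF tendsto_const])
qed

section \<open>Divisors of tropical combinations on the star graph\<close>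

definition trop_comb :: "(nat \<Rightarrow> nat) set \<Rightarrow> ((nat \<Rightarrow> nat) \<Rightarrow> real) \<Rightarrow> nat \<times> real \<Rightarrow> real" where
  "trop_comb P a = (\<lambda>p. Min ((\<lambda>x. fx x p + a x) ` P))"

lemma trop_comb_in_trop_span: "trop_comb P a \<in> trop_span P"
  unfolding trop_span_def trop_comb_def by blast

lemma trop_comb_star_pt: "trop_comb P a (star_pt i t) = Min ((\<lambda>x. real (x i) * t + a x) ` P)"
  by (simp add: trop_comb_def fx_def star_pt_def star_center_def)

lemma out_slope_trop_comb:
  assumes fin: "finite P" and ne: "P \<noteq> {}" and p: "star_pt i (snd p) = p"
  shows "out_slope (trop_comb P a) p (i, \<sigma>)
           = Min ((\<lambda>x. \<sigma> * real (x i)) ` minimizers (\<lambda>x. real (x i) * snd p + a x) P)"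
proof -
  let ?c = "\<lambda>x. real (x i) * snd p + a x"
  have "trop_comb P a p = Min (?c ` P)"
    using trop_comb_star_pt[of P a i "snd p"] p by simp
  then have "(\<lambda>h. (trop_comb P a (star_pt i (snd p + \<sigma> * h)) - trop_comb P a p) / h)
      = (\<lambda>h. (Min ((\<lambda>x. ?c x + \<sigma> * real (x i) * h) ` P) - Min (?c ` P)) / h)"
    by (simp add: trop_comb_star_pt algebra_simps)
  moreover have "((\<lambda>h. (Min ((\<lambda>x. ?c x + \<sigma> * real (x i) * h) ` P) - Min (?c ` P)) / h)
      \<longlongrightarrow> Min ((\<lambda>x. \<sigma> * real (x i)) ` minimizers ?c P)) (at_right 0)"
    using tendsto_Min_affine_slope[OF fin ne, of ?c "\<lambda>x. \<sigma> * real (x i)"] by simp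
  ultimately show ?thesis
    unfolding out_slope_def by (simp add: tendsto_Lim)
qed

lemma star_div_edge_ge:
  assumes fin: "finite P" and t: "0 < t" "t \<le> l"
    and u: "u \<in> minimizers (\<lambda>x. real (x i) * t + a x) P"
    and u': "u' \<in> minimizers (\<lambda>x. real (x i) * t + a x) P"
  shows "real (u i) - real (u' i) \<le> star_div d l (trop_comb P a) (i, t)"
proof -
  let ?M = "minimizers (\<lambda>x. real (x i) * t + a x) P"
  let ?slope = "out_slope (trop_comb P a) (i, t)"
  have ne: "P \<noteq> {}"
    using u by (auto simp: minimizers_def)
  have fin_M: "finite ?M"
    using finite_subset[OF minimizers_subset fin] .
  have pt: "star_pt i (snd (i, t)) = (i, t)"
    using t by (simp add: star_pt_def)
  have forward: "?slope (i, 1) \<le> real (u' i)"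
    unfolding out_slope_trop_comb[OF fin ne pt] using fin_M u' by (auto intro: Min_le)
  have backward: "?slope (i, -1) \<le> - real (u i)"
    unfolding out_slope_trop_comb[OF fin ne pt] using fin_M u by (auto intro: Min_le)
  have not_center: "(i, t) \<noteq> star_center"
    using t by (simp add: star_center_def)
  show ?thesis
  proof (cases "t < l")
    case True
    then have "tangents d l (i, t) = {(i, 1), (i, -1)}"
      using not_center by (simp add: tangents_def)
    then show ?thesis
      using forward backward by (simp add: star_div_def)
  next
    case False
    then have "tangents d l (i, t) = {(i, -1)}"
      using not_center by (simp add: tangents_def)
    then show ?thesis
      using backward by (simp add: star_div_def)
  qed
qed

lemma star_div_center_ge:
  assumes fin: "finite P" and y: "y \<in> minimizers a P" and y': "y' \<in> minimizers a P"
    and i: "i < d" and sum_y: "(\<Sum>k<d. int (y k)) \<le> s"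
  shows "real (y i) - real (y' i) \<le> star_div d l (trop_comb P a) star_center + real_of_int s"
proof -
  let ?slope = "out_slope (trop_comb P a) star_center"
  have ne: "P \<noteq> {}"
    using y by (auto simp: minimizers_def)
  have fin_M: "finite (minimizers a P)"
    using finite_subset[OF minimizers_subset fin] .
  have pt: "star_pt k (snd star_center) = star_center" for k
    by (simp add: star_pt_def star_center_def)
  have slope_le: "?slope (k, 1) \<le> (if k = i then real (y' i) else real (y k))" for k
    unfolding out_slope_trop_comb[OF fin ne pt] using fin_M y y'
    by (auto simp: star_center_def intro: Min_le)
  have "(\<Sum>\<eta>\<in>tangents d l star_center. ?slope \<eta>) = (\<Sum>k<d. ?slope (k, 1))"
  proof -
    have "tangents d l star_center = (\<lambda>k. (k, 1)) ` {..<d}"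
      by (auto simp: tangents_def)
    then show ?thesis
      by (simp add: sum.reindex inj_on_def)
  qed
  also have "\<dots> \<le> (\<Sum>k<d. if k = i then real (y' i) else real (y k))"
    by (intro sum_mono slope_le)
  also have "\<dots> = (\<Sum>k<d. real (y k) + (if k = i then real (y' i) - real (y i) else 0))"
    by (intro sum.cong) auto
  also have "\<dots> = (\<Sum>k<d. real (y k)) - (real (y i) - real (y' i))"
    using i by (simp add: sum.distrib)
  finally have "(\<Sum>\<eta>\<in>tangents d l star_center. ?slope \<eta>)
      \<le> (\<Sum>k<d. real (y k)) - (real (y i) - real (y' i))" .
  moreover have "(\<Sum>k<d. real (y k)) \<le> real_of_int s"
    using sum_y of_int_le_iff[of "\<Sum>k<d. int (y k)" s, where 'a = real] by simp
  ultimately show ?thesis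
    unfolding star_div_def by linarith
qed

lemma star_div_star_pt_ge:
  assumes fin: "finite P" and i: "i < d" and t: "0 \<le> t" "t \<le> l"
    and u: "u \<in> minimizers (\<lambda>x. real (x i) * t + a x) P"
    and u': "u' \<in> minimizers (\<lambda>x. real (x i) * t + a x) P"
    and sum_u: "(\<Sum>k<d. int (u k)) \<le> s"
  shows "real (u i) - real (u' i)
           \<le> star_div d l (trop_comb P a) (star_pt i t)
             + (if star_pt i t = star_center then real_of_int s else 0)"
proof (cases "t = 0")
  case True
  then show ?thesis
    using star_div_center_ge[OF fin _ _ i sum_u, where y' = u' and l = l] u u' by (simp add: star_pt_def)
next
  case False
  then show ?thesis
    using star_div_edge_ge[OF fin _ t(2) u u', of d] t by (simp add: star_pt_def star_center_def)
qed

lemma star_graph_star_pt: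
  assumes "0 < d" "0 \<le> l" "p \<in> star_graph d l"
  obtains i t where "i < d" "0 \<le> t" "t \<le> l" "p = star_pt i t"
proof (cases "p = star_center")
  case True
  then show ?thesis
    using that[of 0 0] assms by (simp add: star_pt_def star_graph_def)
next
  case False
  then obtain i t where "p = (i, t)" "i < d" "0 < t" "t \<le> l"
    using assms(3) by (auto simp: star_graph_def)
  then show ?thesis
    using that[of i t] by (simp add: star_pt_def)
qed

lemma star_div_trop_comb_nonneg:
  assumes fin: "finite P" and ne: "P \<noteq> {}" and d: "0 < d" and l: "0 \<le> l"
    and sum_le: "\<forall>x\<in>P. (\<Sum>i<d. int (x i)) \<le> s" and p: "p \<in> star_graph d l"
  shows "0 \<le> star_div d l (trop_comb P a) p + (if p = star_center then real_of_int s else 0)"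
proof -
  obtain i t where it: "i < d" "0 \<le> t" "t \<le> l" "p = star_pt i t"
    using star_graph_star_pt[OF d l p] .
  obtain u where u: "u \<in> minimizers (\<lambda>x. real (x i) * t + a x) P"
    using minimizers_nonempty[OF fin ne] by blast
  then have "(\<Sum>k<d. int (u k)) \<le> s"
    using sum_le by (simp add: minimizers_def)
  then show ?thesis
    using star_div_star_pt_ge[OF fin it(1-3) u u] it(4) by simp
qed

definition div_plus_sv_ge :: "nat \<Rightarrow> real \<Rightarrow> int \<Rightarrow> (nat \<times> real \<Rightarrow> real) \<Rightarrow> nat \<times> real \<Rightarrow> nat \<times> real \<Rightarrow> bool" where
  "div_plus_sv_ge d l s f v1 v2 \<longleftrightarrow> (\<forall>p\<in>star_graph d l.
     star_div d l f p + (if p = star_center then real_of_int s else 0)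
       \<ge> (if p = v1 then 1 else 0) + (if p = v2 then 1 else 0))"

lemma div_plus_sv_ge_swap: "div_plus_sv_ge d l s f v1 v2 \<longleftrightarrow> div_plus_sv_ge d l s f v2 v1"
  by (auto simp: div_plus_sv_ge_def add.commute)

lemma div_plus_sv_ge_trop_comb:
  assumes "finite P" "P \<noteq> {}" "0 < d" "0 \<le> l" "\<forall>x\<in>P. (\<Sum>i<d. int (x i)) \<le> s"
    and "\<And>p. p \<in> {v1, v2} \<Longrightarrow> star_div d l (trop_comb P a) p
           + (if p = star_center then real_of_int s else 0)
             \<ge> (if p = v1 then 1 else 0) + (if p = v2 then 1 else 0)"
  shows "div_plus_sv_ge d l s (trop_comb P a) v1 v2"
  unfolding div_plus_sv_ge_def
proof
  fix p
  assume "p \<in> star_graph d l"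
  then show "star_div d l (trop_comb P a) p + (if p = star_center then real_of_int s else 0)
      \<ge> (if p = v1 then 1 else 0) + (if p = v2 then 1 else 0)"
    using assms star_div_trop_comb_nonneg[OF assms(1-5)] by (cases "p \<in> {v1, v2}") auto
qed

section \<open>Permutation arrays of rank 2\<close>

lemma finite_grid: "finite (grid r d)"
proof (rule finite_subset)
  show "grid r d \<subseteq> {x. \<forall>i. (i \<in> {..<d} \<longrightarrow> x i \<in> {..r}) \<and> (i \<notin> {..<d} \<longrightarrow> x i = 0)}"
    by (auto simp: grid_def)
qed (intro finite_set_of_finite_funs; simp)

lemma permutation_array_finite: "permutation_array r d P \<Longrightarrow> finite P"
  using finite_subset[OF _ finite_grid] by (auto simp: permutation_array_def)

lemma permutation_array_coord_image:
  assumes pa: "permutation_array r d P" and i: "i < d"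
  shows "(\<lambda>y. y i) ` P = {..r}"
proof (rule card_subset_eq)
  show "(\<lambda>y. y i) ` P \<subseteq> {..r}"
    using pa i by (auto simp: permutation_array_def grid_def)
  have "int (card ((\<lambda>y. y i) ` P)) = int r + 1"
    using pa i by (simp add: permutation_array_def rankable_of_rank_def)
  then show "card ((\<lambda>y. y i) ` P) = card {..r}"
    by simp
qed simp

lemma permutation_array_coord_value:
  assumes "permutation_array r d P" "i < d" "v \<le> r"
  obtains y where "y \<in> P" "y i = v"
  using permutation_array_coord_image[OF assms(1,2)] assms(3) by (metis atMost_iff imageE)

lemma permutation_array_nonempty: "permutation_array r d P \<Longrightarrow> 0 < d \<Longrightarrow> P \<noteq> {}"
  using permutation_array_coord_value[of r d P 0 0] by auto

text \<open>Total rankability applied to the principal subarray above the point b e_i.\<close>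

lemma card_coord_image_upper:
  assumes pa: "permutation_array r d P" and i: "i < d" and j: "j < d" and b: "b \<le> r"
  shows "card ((\<lambda>y. y j) ` {y \<in> P. b \<le> y i}) = r + 1 - b"
proof -
  let ?A = "{y \<in> P. b \<le> y i}"
  define x where "x = (\<lambda>k. if k = i then b else 0)"
  have "x \<in> grid r d"
    using b i by (auto simp: x_def grid_def)
  moreover have "principal_subarray d P x = ?A"
    using i by (auto simp: principal_subarray_def dominates_def x_def)
  ultimately have "rankable d ?A"
    using pa unfolding permutation_array_def totally_rankable_def by metis
  then obtain t where t: "\<forall>k<d. int (card ((\<lambda>y. y k) ` ?A)) = t + 1"
    unfolding rankable_def rankable_of_rank_def by blast
  have "(\<lambda>y. y i) ` ?A = {v \<in> (\<lambda>y. y i) ` P. b \<le> v}"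
    by auto
  also have "\<dots> = {b..r}"
    unfolding permutation_array_coord_image[OF pa i] by auto
  finally have "card ((\<lambda>y. y i) ` ?A) = r + 1 - b"
    by simp
  moreover have "int (card ((\<lambda>y. y j) ` ?A)) = int (card ((\<lambda>y. y i) ` ?A))"
    using t i j by simp
  ultimately show ?thesis
    by simp
qed

lemma permutation_array_not_cross:
  assumes pa: "permutation_array 2 d P" and i: "i < d" and j: "j < d"
  shows "\<not> (\<forall>x\<in>P. x i = e \<or> x j = c)"
proof
  assume cross: "\<forall>x\<in>P. x i = e \<or> x j = c"
  let ?J = "\<lambda>b. (\<lambda>y. y j) ` {y \<in> P. b \<le> y i}"
  \<comment> \<open>by rank, ?J 1 has two elements and ?J 2 one\<close>
  have fin: "finite (?J b)" for b
    using permutation_array_finite[OF pa] by simp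
  have coord_le: "y i \<le> 2" if "y \<in> P" for y
    using that permutation_array_coord_image[OF pa i] by auto
  have off_c: "{..2} - {c} \<subseteq> ?J e"
  proof
    fix v
    assume v: "v \<in> {..2} - {c}"
    then obtain y where "y \<in> P" "y j = v"
      using permutation_array_coord_value[OF pa j] by auto
    then show "v \<in> ?J e"
      using cross v by (auto intro!: image_eqI[of _ _ y])
  qed
  have "card ({..2::nat} - {c}) \<ge> 2"
    by (simp add: card_Diff_singleton_if)
  consider "e = 0 \<or> 2 < e" | "e = 1" | "e = 2"
    by linarith
  then show False
  proof cases
    case 1
    have "?J 1 \<subseteq> {c}"
      using cross coord_le 1 by fastforce
    then have "card (?J 1) \<le> 1"
      using card_mono[of "{c}"] by simp
    then show False
      using card_coord_image_upper[OF pa i j, of 1] by simp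
  next
    case 2
    obtain y where y: "y \<in> P" "y i = 2"
      using permutation_array_coord_value[OF pa i] by auto
    then have "c \<in> ?J 1"
      using cross 2 by (auto intro!: image_eqI[of _ _ y])
    then have "{..2} \<subseteq> ?J 1"
      using off_c 2 by auto
    then have "3 \<le> card (?J 1)"
      using card_mono[OF fin, of "{..2}" 1] by simp
    then show False
      using card_coord_image_upper[OF pa i j, of 1] by simp
  next
    case 3
    then have "2 \<le> card (?J 2)"
      using card_mono[OF fin off_c] \<open>card ({..2} - {c}) \<ge> 2\<close> by simp
    then show False
      using card_coord_image_upper[OF pa i j, of 2] by simp
  qed
qed

section \<open>Choice of the weights\<close>

lemma ex_constant_value:
  assumes "\<And>x y. x \<in> A \<Longrightarrow> y \<in> A \<Longrightarrow> h x = h y"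
  obtains e where "\<forall>x\<in>A. h x = e"
proof (cases "A = {}")
  case True
  then show ?thesis
    using that by simp
next
  case False
  then obtain x0 where "x0 \<in> A"
    by blast
  then have "\<forall>x\<in>A. h x = h x0"
    using assms by blast
  then show ?thesis
    by (rule that)
qed

text \<open>The level D is the least value of max (w u) (w u') over pairs u, u' with f u \<noteq> f u'.\<close>

lemma exists_separating_level:
  fixes w :: "'a \<Rightarrow> real" and f g :: "'a \<Rightarrow> 'b"
  assumes fin: "finite P" and uncovered: "\<And>e c. \<not> (\<forall>x\<in>P. f x = e \<or> g x = c)"
  shows "\<exists>D. (\<exists>u\<in>P. \<exists>u'\<in>P. f u \<noteq> f u' \<and> w u \<le> D \<and> w u' \<le> D)
           \<and> (\<exists>z\<in>P. \<exists>z'\<in>P. g z \<noteq> g z' \<and> D \<le> w z \<and> D \<le> w z')"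
proof -
  define pairs where "pairs = {(u, u') \<in> P \<times> P. f u \<noteq> f u'}"
  let ?height = "\<lambda>(u, u'). max (w u) (w u')"
  have "pairs \<subseteq> P \<times> P"
    by (auto simp: pairs_def)
  then have fin_pairs: "finite pairs"
    using fin finite_subset by blast
  have ne_pairs: "pairs \<noteq> {}"
  proof
    assume empty: "pairs = {}"
    have "f x = f x'" if "x \<in> P" "x' \<in> P" for x x'
      using empty that unfolding pairs_def by blast
    then obtain e where "\<forall>x\<in>P. f x = e"
      by (rule ex_constant_value)
    then show False
      using uncovered by blast
  qed
  obtain uu where "uu \<in> minimizers ?height pairs"
    using minimizers_nonempty[OF fin_pairs ne_pairs] by blast
  then obtain u u' where uu': "(u, u') \<in> pairs" "\<forall>p\<in>pairs. max (w u) (w u') \<le> ?height p"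
    by (cases uu) (auto simp: minimizers_def)
  define D where "D = max (w u) (w u')"
  have "\<exists>z\<in>P. \<exists>z'\<in>P. g z \<noteq> g z' \<and> D \<le> w z \<and> D \<le> w z'"
  proof (rule ccontr)
    assume "\<not> ?thesis"
    then have "g z = g z'" if "z \<in> {x \<in> P. D \<le> w x}" "z' \<in> {x \<in> P. D \<le> w x}" for z z'
      using that by blast
    then obtain c where c: "\<forall>x\<in>{x \<in> P. D \<le> w x}. g x = c"
      by (rule ex_constant_value)
    have "f x = f x'" if "x \<in> {x \<in> P. w x < D}" "x' \<in> {x \<in> P. w x < D}" for x x'
    proof (rule ccontr)
      assume "f x \<noteq> f x'"
      then have "(x, x') \<in> pairs"
        using that by (simp add: pairs_def)
      then show False
        using uu'(2) that by (fastforce simp: D_def)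
    qed
    then obtain e where e: "\<forall>x\<in>{x \<in> P. w x < D}. f x = e"
      by (rule ex_constant_value)
    have "\<forall>x\<in>P. f x = e \<or> g x = c"
      using e c by (auto simp: not_less[symmetric])
    then show False
      using uncovered by blast
  qed
  moreover have "\<exists>u\<in>P. \<exists>u'\<in>P. f u \<noteq> f u' \<and> w u \<le> D \<and> w u' \<le> D"
    using uu'(1) by (intro bexI[of _ u] bexI[of _ u']) (auto simp: pairs_def D_def)
  ultimately show ?thesis
    by blast
qed

lemma one_le_of_nat_diffs_le:
  fixes m n :: nat
  assumes "m \<noteq> n" "real m - real n \<le> X" "real n - real m \<le> X"
  shows "1 \<le> X"
proof (cases "m < n")
  case True
  then have "real m + 1 \<le> real n"
    by linarith
  then show ?thesis
    using assms by linarith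
next
  case False
  then have "real n + 1 \<le> real m"
    using assms(1) by linarith
  then show ?thesis
    using assms by linarith
qed

lemma same_edge_weights:
  assumes pa: "permutation_array 2 d P" and d: "0 < d"
    and sum_le: "\<forall>x\<in>P. (\<Sum>i<d. int (x i)) \<le> s"
    and i: "i < d" and t: "0 \<le> t1" "t1 \<le> t2" "t2 \<le> l"
  shows "\<exists>a. div_plus_sv_ge d l s (trop_comb P a) (star_pt i t1) (star_pt i t2)"
proof -
  define a where "a = (\<lambda>x::nat \<Rightarrow> nat. (if x i \<le> 1 then t1 else 0) + (if x i = 0 then t2 else 0))"
  \<comment> \<open>at distance \<tau> the pieces with x_i = 2, 1, 0 take the values 2\<tau>, \<tau> + t1, t1 + t2:
    the first two tie at t1, the last two at t2\<close>
  let ?c = "\<lambda>\<tau> x. real (x i) * \<tau> + a x"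
  have fin: "finite P"
    using permutation_array_finite[OF pa] .
  have coord: "x i = 0 \<or> x i = 1 \<or> x i = 2" if "x \<in> P" for x
  proof -
    have "x i \<le> 2"
      using that permutation_array_coord_image[OF pa i] by auto
    then show ?thesis
      by arith
  qed
  obtain y0 where y0: "y0 \<in> P" "y0 i = 0"
    by (rule permutation_array_coord_value[OF pa i, where v = 0]) simp_all
  obtain y1 where y1: "y1 \<in> P" "y1 i = 1"
    by (rule permutation_array_coord_value[OF pa i, where v = 1]) simp_all
  obtain y2 where y2: "y2 \<in> P" "y2 i = 2"
    by (rule permutation_array_coord_value[OF pa i, where v = 2]) simp_all
  note y = y0 y1 y2
  have lower_t1: "2 * t1 \<le> ?c t1 x" if "x \<in> P" for x
    using coord[OF that] t by (elim disjE) (simp_all add: a_def)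
  have lower_t2: "t1 + t2 \<le> ?c t2 x" if "x \<in> P" for x
    using coord[OF that] t by (elim disjE) (simp_all add: a_def)
  have min_t1: "x \<in> minimizers (?c t1) P" if "x \<in> P" "?c t1 x = 2 * t1" for x
    using that lower_t1 by (auto simp: minimizers_def)
  have min_t2: "x \<in> minimizers (?c t2) P" if "x \<in> P" "?c t2 x = t1 + t2" for x
    using that lower_t2 by (auto simp: minimizers_def)
  have bound: "real (u i) - real (u' i) \<le> star_div d l (trop_comb P a) (star_pt i \<tau>)
      + (if star_pt i \<tau> = star_center then real_of_int s else 0)"
    if "\<tau> \<in> {t1, t2}" "u \<in> minimizers (?c \<tau>) P" "u' \<in> minimizers (?c \<tau>) P" for \<tau> u u'
    using star_div_star_pt_ge[OF fin i _ _ that(2,3)] that sum_le t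
    by (auto simp: minimizers_def)
  have "div_plus_sv_ge d l s (trop_comb P a) (star_pt i t1) (star_pt i t2)"
  proof (rule div_plus_sv_ge_trop_comb)
    fix p
    assume p: "p \<in> {star_pt i t1, star_pt i t2}"
    show "star_div d l (trop_comb P a) p + (if p = star_center then real_of_int s else 0)
        \<ge> (if p = star_pt i t1 then 1 else 0) + (if p = star_pt i t2 then 1 else 0)"
    proof (cases "t1 = t2")
      case True
      then show ?thesis
        using p bound[of t1 y2 y0] min_t1 y by (simp add: a_def)
    next
      case False
      then have "star_pt i t1 \<noteq> star_pt i t2"
        using t by (auto simp: star_pt_def star_center_def)
      then show ?thesis
        using p bound[of t1 y2 y1] bound[of t2 y1 y0] min_t1 min_t2 y by (auto simp: a_def)
    qed
  qed (use fin permutation_array_nonempty[OF pa d] d sum_le t in auto)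
  then show ?thesis
    by blast
qed

lemma distinct_edges_weights:
  assumes pa: "permutation_array 2 d P" and d: "0 < d"
    and sum_le: "\<forall>x\<in>P. (\<Sum>i<d. int (x i)) \<le> s"
    and i: "i < d" and j: "j < d" and ij: "i \<noteq> j"
    and t1: "0 < t1" "t1 \<le> l" and t2: "0 < t2" "t2 \<le> l"
  shows "\<exists>a. div_plus_sv_ge d l s (trop_comb P a) (i, t1) (j, t2)"
proof -
  have fin: "finite P"
    using permutation_array_finite[OF pa] .
  define w where "w = (\<lambda>x::nat \<Rightarrow> nat. (2 - real (x j)) * t2 - (2 - real (x i)) * t1)"
  obtain D where
    "\<exists>u\<in>P. \<exists>u'\<in>P. u i \<noteq> u' i \<and> w u \<le> D \<and> w u' \<le> D"
    "\<exists>z\<in>P. \<exists>z'\<in>P. z j \<noteq> z' j \<and> D \<le> w z \<and> D \<le> w z'"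
    using exists_separating_level[OF fin permutation_array_not_cross[OF pa i j], of w] by blast
  then obtain u u' z z' where uu': "u \<in> P" "u' \<in> P" "u i \<noteq> u' i" "w u \<le> D" "w u' \<le> D"
    and zz': "z \<in> P" "z' \<in> P" "z j \<noteq> z' j" "D \<le> w z" "D \<le> w z'"
    by blast
  define a where "a = (\<lambda>x::nat \<Rightarrow> nat. max ((2 - real (x i)) * t1 + D) ((2 - real (x j)) * t2))"
  \<comment> \<open>x is active at (i, t1) iff w x \<le> D, and at (j, t2) iff D \<le> w x\<close>
  have min_i: "x \<in> minimizers (\<lambda>x. real (x i) * t1 + a x) P" if "x \<in> P" "w x \<le> D" for x
  proof -
    have "2 * t1 + D \<le> real (y i) * t1 + a y" for y
      by (auto simp: a_def max_def algebra_simps)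
    moreover have "real (x i) * t1 + a x = 2 * t1 + D"
      using that(2) by (auto simp: a_def w_def max_def algebra_simps)
    ultimately show ?thesis
      using that(1) by (simp add: minimizers_def)
  qed
  have min_j: "x \<in> minimizers (\<lambda>x. real (x j) * t2 + a x) P" if "x \<in> P" "D \<le> w x" for x
  proof -
    have "2 * t2 \<le> real (y j) * t2 + a y" for y
      by (auto simp: a_def max_def algebra_simps)
    moreover have "real (x j) * t2 + a x = 2 * t2"
      using that(2) by (auto simp: a_def w_def max_def algebra_simps)
    ultimately show ?thesis
      using that(1) by (simp add: minimizers_def)
  qed
  have at_i: "1 \<le> star_div d l (trop_comb P a) (i, t1)"
    using one_le_of_nat_diffs_le[OF uu'(3)]
      star_div_edge_ge[OF fin t1 min_i[OF uu'(1,4)] min_i[OF uu'(2,5)]]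
      star_div_edge_ge[OF fin t1 min_i[OF uu'(2,5)] min_i[OF uu'(1,4)]]
    by blast
  have at_j: "1 \<le> star_div d l (trop_comb P a) (j, t2)"
    using one_le_of_nat_diffs_le[OF zz'(3)]
      star_div_edge_ge[OF fin t2 min_j[OF zz'(1,4)] min_j[OF zz'(2,5)]]
      star_div_edge_ge[OF fin t2 min_j[OF zz'(2,5)] min_j[OF zz'(1,4)]]
    by blast
  have "div_plus_sv_ge d l s (trop_comb P a) (i, t1) (j, t2)"
  proof (rule div_plus_sv_ge_trop_comb[OF fin permutation_array_nonempty[OF pa d] d _ sum_le])
    show "0 \<le> l"
      using t1 by simp
    fix p
    assume "p \<in> {(i, t1), (j, t2)}"
    then show "star_div d l (trop_comb P a) p + (if p = star_center then real_of_int s else 0)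
        \<ge> (if p = (i, t1) then 1 else 0) + (if p = (j, t2) then 1 else 0)"
      using at_i at_j ij t1 t2 by (auto simp: star_center_def)
  qed
  then show ?thesis
    by blast
qed

lemma exists_weights:
  assumes pa: "permutation_array 2 d P" and d: "0 < d" and l: "0 \<le> l"
    and sum_le: "\<forall>x\<in>P. (\<Sum>i<d. int (x i)) \<le> s"
    and v1: "v1 \<in> star_graph d l" and v2: "v2 \<in> star_graph d l"
  shows "\<exists>a. div_plus_sv_ge d l s (trop_comb P a) v1 v2"
proof -
  have same_edge: "\<exists>a. div_plus_sv_ge d l s (trop_comb P a) (star_pt i t) (star_pt i t')"
    if "i < d" "0 \<le> t" "t \<le> l" "0 \<le> t'" "t' \<le> l" for i t t'
  proof (cases "t \<le> t'")
    case True
    then show ?thesis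
      using same_edge_weights[OF pa d sum_le that(1)] that by blast
  next
    case False
    then show ?thesis
      using same_edge_weights[OF pa d sum_le that(1), of t' t l] that div_plus_sv_ge_swap by auto
  qed
  have center: "star_pt i 0 = star_pt j 0" for i j
    by (simp add: star_pt_def)
  obtain i1 t1 where it1: "i1 < d" "0 \<le> t1" "t1 \<le> l" "v1 = star_pt i1 t1"
    using star_graph_star_pt[OF d l v1] .
  obtain i2 t2 where it2: "i2 < d" "0 \<le> t2" "t2 \<le> l" "v2 = star_pt i2 t2"
    using star_graph_star_pt[OF d l v2] .
  consider "t1 = 0" | "t2 = 0" | "i1 = i2" | "0 < t1" "0 < t2" "i1 \<noteq> i2"
    using it1 it2 by linarith
  then show ?thesis
  proof cases
    case 1
    then show ?thesis
      using same_edge[of i2 t1 t2] it1 it2 center by metis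
  next
    case 2
    then show ?thesis
      using same_edge[of i1 t1 t2] it1 it2 center by metis
  next
    case 3
    then show ?thesis
      using same_edge[of i1 t1 t2] it1 it2 by blast
  next
    case 4
    then show ?thesis
      using distinct_edges_weights[OF pa d sum_le it1(1) it2(1) _ _ it1(3) _ it2(3)] it1 it2
      by (simp add: star_pt_def)
  qed
qed

theorem mainTheorem18:
  fixes d :: nat and P :: "(nat \<Rightarrow> nat) set" and l :: real and s :: int
    and v1 v2 :: "nat \<times> real"
  assumes "d \<ge> 1"
    and "permutation_array 2 d P"
    and "l > 0"
    and "\<forall>x\<in>P. (\<Sum>i<d. int (x i)) \<le> s"
    and "v1 \<in> star_graph d l" and "v2 \<in> star_graph d l"
  shows "\<exists>f\<in>trop_span P. \<forall>p\<in>star_graph d l.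
           star_div d l f p + (if p = star_center then real_of_int s else 0)
             \<ge> (if p = v1 then 1 else 0) + (if p = v2 then 1 else 0)"
proof -
  obtain a where "div_plus_sv_ge d l s (trop_comb P a) v1 v2"
    using exists_weights[OF assms(2) _ _ assms(4-6)] assms(1,3) by fastforce
  then show ?thesis
    using trop_comb_in_trop_span unfolding div_plus_sv_ge_def by blast
qed

end
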